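(* Consider the following bidding algorithm in repeated non-credible second-price auctions with known $G$, unknown $\alpha_0\in[0,1]$ and bandit feedback: bid $b_1=1$; for $t=2,\dots,T$, after observing $v_t$, compute $\widetilde{\alpha}_t=\arg\min_{\alpha\in[0,1]}\left|\sum_{s=1}^{t-1}\big(r_s-r(v_s,b_s,\alpha)\big)\right|$ and bid $b_t=\arg\max_b r(v_t,b,\widetilde{\alpha}_t)$. Then for every $\delta\in(0,1)$, with probability at least $1-\delta$, for all $t\in\{2,\dots,T\}$, $$|\widetilde{\alpha}_t-\alpha_0|\le w_t,\qquad w_t=\frac{2\sqrt{2(t-1)\log(2T/\delta)}}{\sum_{s=1}^{t-1}\int_0^{b_s}G(y)\,dy}.$$
   Context: Setting: rounds $t=1,\dots,T$; values $v_t\in[0,1]$ i.i.d. from a distribution $F$; highest competing bids $d_t\in\mathbb{R}_+$ i.i.d. from distribution $G$ (CDF $G$), independent of the values. The bidder bids $b_t\ge0$; $x_t=\mathbb{I}\{b_t\ge d_t\}$; if she wins she pays $p_t=\alpha_0d_t+(1-\alpha_0)b_t$; cost $c_t=x_tp_t$, observed reward $r_t=x_tv_t-c_t$. Bandit feedback: before round $t$ the bidder knows $(v_s,x_s,c_s)_{s=1}^{t-1}$. Here $r(v,b,\alpha)=(v-b)G(b)+\alpha\int_0^bG(y)\,dy$. *)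

theory Defs
  imports "HOL-Probability.Probability"
begin

definition gen_sigma :: "'a set \<Rightarrow> ('a \<Rightarrow> real) set \<Rightarrow> 'a measure" where
  "gen_sigma \<Omega> Xs = sigma \<Omega> {X -` B \<inter> \<Omega> | X B. X \<in> Xs \<and> B \<in> sets borel}"

definition win :: "real \<Rightarrow> real \<Rightarrow> real" where
  "win b d = (if b \<ge> d then 1 else 0)"

definition cost :: "real \<Rightarrow> real \<Rightarrow> real \<Rightarrow> real" where
  "cost \<alpha>0 b d = win b d * (\<alpha>0 * d + (1 - \<alpha>0) * b)"

definition reward :: "real \<Rightarrow> real \<Rightarrow> real \<Rightarrow> real \<Rightarrow> real" where
  "reward \<alpha>0 v b d = win b d * v - cost \<alpha>0 b d"

definition rfun :: "(real \<Rightarrow> real) \<Rightarrow> real \<Rightarrow> real \<Rightarrow> real \<Rightarrow> real" where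
  "rfun G v b \<alpha> = (v - b) * G b + \<alpha> * integral {0..b} G"

end

theory Submission
  imports Defs
begin

(* Let N_t be the sum over rounds s < t of r_s - r(v_s, b_s, alpha0). Just before the competing
   bid d_s is drawn, the values up to round s and the competing bids before it are known; they
   determine b_s, while d_s is still independent of them and distributed according to G. By the
   layer-cake formula E[d 1(d <= b)] = b G(b) - integral_0^b G, the increment of N has conditional
   mean zero, and it ranges over an interval of length at most 1. Hoeffding's lemma bounds its
   conditional moment generating function by exp(l^2/8), hence E exp(l N_t) <= exp((t-1) l^2/8),
   and Chernoff's bound gives |N_t| <= sqrt(2 (t-1) log(2T/delta)) outside an event of probability
   delta/T; a union bound handles all rounds at once.
   On the other hand alpha |-> sum_{s<t} (r_s - r(v_s, b_s, alpha)) is affine with slope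
   -sum_{s<t} integral_0^{b_s} G and takes the value N_t at alpha0, so a minimiser of its absolute
   value over [0,1] lies within 2 |N_t| / sum_{s<t} integral_0^{b_s} G of alpha0. *)

lemma space_gen_sigma [simp]: "space (gen_sigma \<Omega> Xs) = \<Omega>"
  unfolding gen_sigma_def by (subst space_measure_of) auto

lemma sets_gen_sigma:
  "sets (gen_sigma \<Omega> Xs) = sigma_sets \<Omega> {X -` B \<inter> \<Omega> | X B. X \<in> Xs \<and> B \<in> sets borel}"
  unfolding gen_sigma_def by (subst sets_measure_of) auto

lemma sets_gen_sigma_mono: "Xs \<subseteq> Ys \<Longrightarrow> sets (gen_sigma \<Omega> Xs) \<subseteq> sets (gen_sigma \<Omega> Ys)"
  unfolding sets_gen_sigma by (rule sigma_sets_subseteq) blast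

lemma measurable_gen_sigma_mono:
  "f \<in> measurable (gen_sigma \<Omega> Xs) N \<Longrightarrow> Xs \<subseteq> Ys \<Longrightarrow> f \<in> measurable (gen_sigma \<Omega> Ys) N"
  using measurable_mono[OF order_refl refl sets_gen_sigma_mono, of Xs Ys \<Omega> N] by auto

lemma borel_measurable_gen_sigma: "X \<in> Xs \<Longrightarrow> X \<in> borel_measurable (gen_sigma \<Omega> Xs)"
  by (rule measurableI) (auto simp: sets_gen_sigma intro!: sigma_sets.Basic)

lemma sets_gen_sigma_subset:
  assumes "space N = \<Omega>" and "\<And>X. X \<in> Xs \<Longrightarrow> X \<in> borel_measurable N"
  shows "sets (gen_sigma \<Omega> Xs) \<subseteq> sets N"
  unfolding sets_gen_sigma using assms
  by (intro sets.sigma_sets_subset') (auto intro: measurable_sets)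

lemma measurable_gen_sigma_subset:
  assumes "space N = \<Omega>" and "\<And>X. X \<in> Xs \<Longrightarrow> X \<in> borel_measurable N"
    and "f \<in> measurable (gen_sigma \<Omega> Xs) S"
  shows "f \<in> measurable N S"
  using measurable_mono[OF order_refl refl sets_gen_sigma_subset[OF assms(1,2)]] assms by auto

lemma (in prob_space) indep_set_gen_sigma:
  assumes indep: "indep_vars (\<lambda>_. borel) X I" and J: "J \<subseteq> I" "i \<in> I" "i \<notin> J"
  shows "indep_set (sets (gen_sigma (space M) (X ` J))) {X i -` A \<inter> space M | A. A \<in> sets borel}"
proof -
  define E where "E j = {X j -` B \<inter> space M | B. B \<in> sets borel}" for j
  have sets_eq: "sets (gen_sigma (space M) (X ` J)) = sigma_sets (space M) (\<Union>j\<in>J. E j)"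
    unfolding sets_gen_sigma E_def by (intro arg_cong[where f = "sigma_sets (space M)"]) auto
  have "indep_sets E I"
    using indep unfolding indep_vars_def2 E_def by simp
  then have "indep_sets E (\<Union>k. case_bool J {i} k)"
    by (rule indep_sets_mono_index[rotated]) (use J in \<open>auto split: bool.split_asm\<close>)
  moreover have "Int_stable (E j)" for j
  proof (rule Int_stableI)
    fix A B assume "A \<in> E j" "B \<in> E j"
    then obtain A' B' where "A = X j -` A' \<inter> space M" "B = X j -` B' \<inter> space M"
      and "A' \<in> sets borel" "B' \<in> sets borel"
      unfolding E_def by blast
    then have "A \<inter> B = X j -` (A' \<inter> B') \<inter> space M" "A' \<inter> B' \<in> sets borel"
      by auto
    then show "A \<inter> B \<in> E j"
      unfolding E_def by blast
  qed
  moreover have "disjoint_family_on (case_bool J {i}) UNIV"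
    using J by (auto simp: disjoint_family_on_def split: bool.split)
  ultimately have "indep_sets (\<lambda>k. sigma_sets (space M) (\<Union>j\<in>case_bool J {i} k. E j)) UNIV"
    by (intro indep_sets_collect_sigma)
  then show ?thesis
    unfolding indep_set_def
  proof (rule indep_sets_mono_sets)
    fix k :: bool
    show "case_bool (sets (gen_sigma (space M) (X ` J))) {X i -` A \<inter> space M | A. A \<in> sets borel} k
        \<subseteq> sigma_sets (space M) (\<Union>j\<in>case_bool J {i} k. E j)"
      by (cases k) (auto simp: sets_eq E_def)
  qed
qed

lemma (in prob_space) distr_pair_eq_of_indep_set:
  assumes F: "sets F \<subseteq> events" "space F = space M"
    and Y: "Y \<in> measurable F S" and D: "random_variable T D"
    and indep: "indep_set (sets F) {D -` A \<inter> space M | A. A \<in> sets T}"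
  shows "distr M S Y \<Otimes>\<^sub>M distr M T D = distr M (S \<Otimes>\<^sub>M T) (\<lambda>\<omega>. (Y \<omega>, D \<omega>))"
proof -
  have Y': "random_variable S Y"
    using measurable_mono[OF order_refl refl F] Y by auto
  interpret Y: prob_space "distr M S Y"
    by (rule prob_space_distr[OF Y'])
  interpret D: prob_space "distr M T D"
    by (rule prob_space_distr[OF D])
  show ?thesis
  proof (rule pair_measure_eqI)
    fix A B
    assume A: "A \<in> sets (distr M S Y)" and B: "B \<in> sets (distr M T D)"
    have "Y -` A \<inter> space M \<in> sets F" "D -` B \<inter> space M \<in> {D -` A \<inter> space M | A. A \<in> sets T}"
      using measurable_sets[OF Y, of A] A B F(2) by auto
    then have "prob ((Y -` A \<inter> space M) \<inter> (D -` B \<inter> space M))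
        = prob (Y -` A \<inter> space M) * prob (D -` B \<inter> space M)"
      using indep unfolding indep_sets2_eq by blast
    moreover have "(\<lambda>\<omega>. (Y \<omega>, D \<omega>)) -` (A \<times> B) \<inter> space M = (Y -` A \<inter> space M) \<inter> (D -` B \<inter> space M)"
      by auto
    ultimately show "emeasure (distr M S Y) A * emeasure (distr M T D) B
        = emeasure (distr M (S \<Otimes>\<^sub>M T) (\<lambda>\<omega>. (Y \<omega>, D \<omega>))) (A \<times> B)"
      using A B Y' D
      by (simp add: emeasure_distr measurable_Pair emeasure_eq_measure measure_nonneg ennreal_mult)
  qed (simp_all add: Y.sigma_finite_measure_axioms D.sigma_finite_measure_axioms)
qed

lemma (in prob_space) nn_integral_indep_set:
  assumes F: "sets F \<subseteq> events" "space F = space M"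
    and Y: "Y \<in> measurable F S" and D: "random_variable T D"
    and indep: "indep_set (sets F) {D -` A \<inter> space M | A. A \<in> sets T}"
    and g: "g \<in> borel_measurable (S \<Otimes>\<^sub>M T)"
  shows "(\<integral>\<^sup>+\<omega>. g (Y \<omega>, D \<omega>) \<partial>M) = (\<integral>\<^sup>+\<omega>. (\<integral>\<^sup>+x. g (Y \<omega>, x) \<partial>distr M T D) \<partial>M)"
proof -
  have Y': "random_variable S Y"
    using measurable_mono[OF order_refl refl F] Y by auto
  interpret D: prob_space "distr M T D"
    by (rule prob_space_distr[OF D])
  have g': "g \<in> borel_measurable (distr M S Y \<Otimes>\<^sub>M distr M T D)"
    using g by (simp cong: measurable_cong_sets)
  have "(\<integral>\<^sup>+\<omega>. g (Y \<omega>, D \<omega>) \<partial>M) = (\<integral>\<^sup>+p. g p \<partial>distr M (S \<Otimes>\<^sub>M T) (\<lambda>\<omega>. (Y \<omega>, D \<omega>)))"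
    using Y' D g by (intro nn_integral_distr[symmetric]) auto
  also have "\<dots> = (\<integral>\<^sup>+p. g p \<partial>(distr M S Y \<Otimes>\<^sub>M distr M T D))"
    by (simp add: distr_pair_eq_of_indep_set[OF F Y D indep])
  also have "\<dots> = (\<integral>\<^sup>+y. (\<integral>\<^sup>+x. g (y, x) \<partial>distr M T D) \<partial>distr M S Y)"
    by (rule D.nn_integral_fst[OF g', symmetric])
  also have "\<dots> = (\<integral>\<^sup>+\<omega>. (\<integral>\<^sup>+x. g (Y \<omega>, x) \<partial>distr M T D) \<partial>M)"
    using D.borel_measurable_nn_integral_fst[OF g'] by (simp add: nn_integral_distr[OF Y'])
  finally show ?thesis .
qed

section \<open>Concentration\<close>

lemma (in prob_space) prob_ge_le_of_mgf_bound:
  assumes [measurable]: "X \<in> borel_measurable M" and c: "0 < c" and \<epsilon>: "0 < \<epsilon>"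
    and mgf: "\<And>l. 0 < l \<Longrightarrow> (\<integral>\<^sup>+\<omega>. exp (l * X \<omega>) \<partial>M) \<le> exp (c * l\<^sup>2 / 8)"
  shows "prob {\<omega> \<in> space M. \<epsilon> \<le> X \<omega>} \<le> exp (- 2 * \<epsilon>\<^sup>2 / c)"
proof -
  define l where "l = 4 * \<epsilon> / c"
  have l: "0 < l"
    using c \<epsilon> by (simp add: l_def)
  have "ennreal (prob {\<omega> \<in> space M. \<epsilon> \<le> X \<omega>})
      \<le> ennreal (exp (- l * \<epsilon>)) * (\<integral>\<^sup>+\<omega>. exp (l * X \<omega>) \<partial>M)"
    using Chernoff_ineq_nn_integral_ge[OF l sets.top, where M = M and f = X and a = \<epsilon>]
    by (simp add: emeasure_eq_measure)
  also have "\<dots> \<le> ennreal (exp (- l * \<epsilon>)) * exp (c * l\<^sup>2 / 8)"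
    using mgf[OF l] by (rule mult_left_mono) simp
  also have "\<dots> = exp (c * l\<^sup>2 / 8 - l * \<epsilon>)"
    by (simp add: mult_exp_exp algebra_simps flip: ennreal_mult)
  also have "c * l\<^sup>2 / 8 - l * \<epsilon> = - 2 * \<epsilon>\<^sup>2 / c"
    using c by (simp add: l_def field_simps power2_eq_square)
  finally show ?thesis
    by simp
qed

lemma (in prob_space) prob_abs_gt_le_of_mgf_bound:
  assumes [measurable]: "X \<in> borel_measurable M" and c: "0 < c" and \<epsilon>: "0 < \<epsilon>"
    and mgf: "\<And>l. (\<integral>\<^sup>+\<omega>. exp (l * X \<omega>) \<partial>M) \<le> exp (c * l\<^sup>2 / 8)"
  shows "prob {\<omega> \<in> space M. \<epsilon> < \<bar>X \<omega>\<bar>} \<le> 2 * exp (- 2 * \<epsilon>\<^sup>2 / c)"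
proof -
  have "prob {\<omega> \<in> space M. \<epsilon> < \<bar>X \<omega>\<bar>}
      \<le> prob ({\<omega> \<in> space M. \<epsilon> \<le> X \<omega>} \<union> {\<omega> \<in> space M. \<epsilon> \<le> - X \<omega>})"
    by (intro finite_measure_mono) auto
  also have "\<dots> \<le> prob {\<omega> \<in> space M. \<epsilon> \<le> X \<omega>} + prob {\<omega> \<in> space M. \<epsilon> \<le> - X \<omega>}"
    by (intro measure_Un_le) auto
  also have "\<dots> \<le> exp (- 2 * \<epsilon>\<^sup>2 / c) + exp (- 2 * \<epsilon>\<^sup>2 / c)"
  proof (intro add_mono prob_ge_le_of_mgf_bound c \<epsilon>)
    fix l :: real
    show "(\<integral>\<^sup>+\<omega>. exp (l * X \<omega>) \<partial>M) \<le> exp (c * l\<^sup>2 / 8)"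
      by (rule mgf)
    show "(\<integral>\<^sup>+\<omega>. exp (l * - X \<omega>) \<partial>M) \<le> exp (c * l\<^sup>2 / 8)"
      using mgf[of "- l"] by simp
  qed simp_all
  finally show ?thesis
    by simp
qed

lemma (in prob_space) prob_all_ge_of_prob_not_le:
  assumes fin: "finite I" and events: "\<And>i. i \<in> I \<Longrightarrow> {\<omega> \<in> space M. \<not> P i \<omega>} \<in> events"
    and bound: "\<And>i. i \<in> I \<Longrightarrow> prob {\<omega> \<in> space M. \<not> P i \<omega>} \<le> \<epsilon>"
  shows "1 - real (card I) * \<epsilon> \<le> prob {\<omega> \<in> space M. \<forall>i\<in>I. P i \<omega>}"
proof -
  let ?B = "\<lambda>i. {\<omega> \<in> space M. \<not> P i \<omega>}"
  have "1 - real (card I) * \<epsilon> \<le> 1 - (\<Sum>i\<in>I. prob (?B i))"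
    using sum_bounded_above[of I "\<lambda>i. prob (?B i)" \<epsilon>] bound by simp
  also have "\<dots> \<le> 1 - prob (\<Union>i\<in>I. ?B i)"
    using finite_measure_subadditive_finite[OF fin, of ?B] events by auto
  also have "\<dots> = prob (space M - (\<Union>i\<in>I. ?B i))"
    using fin events by (subst prob_compl) auto
  also have "space M - (\<Union>i\<in>I. ?B i) = {\<omega> \<in> space M. \<forall>i\<in>I. P i \<omega>}"
    by auto
  finally show ?thesis .
qed

lemma (in interval_bounded_random_variable) nn_integral_exp_le_of_expectation_0:
  assumes "expectation f = 0"
  shows "(\<integral>\<^sup>+x. exp (l * f x) \<partial>M) \<le> exp (l\<^sup>2 * (b - a)\<^sup>2 / 8)"
proof (cases l "0 :: real" rule: linorder_cases)
  case less
  interpret neg: interval_bounded_random_variable M "\<lambda>x. - f x" "- b" "- a"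
    by unfold_locales (auto intro!: eventually_mono[OF AE_in_interval])
  have "(\<integral>\<^sup>+x. exp ((- l) * (- f x)) \<partial>M) \<le> exp ((- l)\<^sup>2 * (- a - - b)\<^sup>2 / 8)"
    using less assms by (intro neg.Hoeffdings_lemma_nn_integral_0) auto
  then show ?thesis
    by (simp add: power2_commute)
next
  case equal
  then show ?thesis
    by (simp add: emeasure_space_1)
next
  case greater
  then show ?thesis
    using assms by (rule Hoeffdings_lemma_nn_integral_0)
qed

section \<open>The reward noise of a single round\<close>

lemma mono_integral_from_0:
  fixes G :: "real \<Rightarrow> real"
  assumes mono: "mono G" and nonneg: "\<And>y. 0 \<le> G y"
  shows "mono (\<lambda>x. integral {0..x} G)"
proof (rule monoI)
  fix x y :: real
  assume "x \<le> y"
  have int: "G integrable_on {a..b}" for a b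
    by (rule integrable_on_mono_on) (meson mono mono_imp_mono_on)
  show "integral {0..x} G \<le> integral {0..y} G"
  proof (cases "x < 0")
    case True
    then have "integral {0..x} G = 0"
      by simp
    moreover have "0 \<le> integral {0..y} G"
      using int nonneg by (intro integral_nonneg) auto
    ultimately show ?thesis
      by simp
  next
    case False
    then have "integral {0..y} G = integral {0..x} G + integral {x..y} G"
      using \<open>x \<le> y\<close> int by (intro Henstock_Kurzweil_Integration.integral_combine[symmetric]) auto
    moreover have "0 \<le> integral {x..y} G"
      using int nonneg by (intro integral_nonneg) auto
    ultimately show ?thesis
      by simp
  qed
qed

definition reward_noise :: "real \<Rightarrow> (real \<Rightarrow> real) \<Rightarrow> real \<Rightarrow> real \<Rightarrow> real \<Rightarrow> real" where
  "reward_noise \<alpha>0 G v \<beta> y = reward \<alpha>0 v \<beta> y - rfun G v \<beta> \<alpha>0"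

lemma reward_mem_interval:
  assumes "0 \<le> y" "\<alpha>0 \<in> {0..1}" "0 \<le> \<beta>" "0 \<le> v"
  shows "reward \<alpha>0 v \<beta> y \<in> {min 0 (v - \<beta>)..v}"
proof (cases "y \<le> \<beta>")
  case True
  have "\<alpha>0 * y \<le> \<alpha>0 * \<beta>"
    using assms True by (intro mult_left_mono) auto
  then have "\<alpha>0 * y + (1 - \<alpha>0) * \<beta> \<le> \<beta>"
    by (simp add: algebra_simps)
  moreover have "0 \<le> \<alpha>0 * y + (1 - \<alpha>0) * \<beta>"
    using assms by simp
  moreover have "reward \<alpha>0 v \<beta> y = v - (\<alpha>0 * y + (1 - \<alpha>0) * \<beta>)"
    using True by (simp add: reward_def cost_def win_def)
  ultimately show ?thesis
    by simp
next
  case False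
  then show ?thesis
    using assms by (simp add: reward_def cost_def win_def)
qed

context real_distribution
begin

lemma mono_cdf: "mono (cdf M)"
  using cdf_nondecreasing by (rule monoI)

lemma cdf_integrable_on: "cdf M integrable_on {a..b}"
  by (rule integrable_on_mono_on) (meson mono_cdf mono_imp_mono_on)

lemma borel_measurable_integral_cdf [measurable]:
  "(\<lambda>x. integral {0..x} (cdf M)) \<in> borel_measurable borel"
  by (intro borel_measurable_mono mono_integral_from_0 mono_cdf cdf_nonneg)

lemma nn_integral_indicator_times_id:
  assumes "0 \<le> \<beta>"
  shows "(\<integral>\<^sup>+y. ennreal (indicator {0..\<beta>} y * y) \<partial>M) = integral {0..\<beta>} (\<lambda>x. cdf M \<beta> - cdf M x)"
proof -
  have length: "ennreal (indicator {0..\<beta>} y * y)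
      = (\<integral>\<^sup>+x. indicator {0..\<beta>} x * indicator {x<..\<beta>} y \<partial>lborel)" for y
  proof (cases "0 \<le> y \<and> y \<le> \<beta>")
    case True
    then have "(\<integral>\<^sup>+x. indicator {0..\<beta>} x * indicator {x<..\<beta>} y \<partial>lborel)
        = (\<integral>\<^sup>+x. indicator {0..<y} x \<partial>lborel)"
      by (intro nn_integral_cong) (auto simp: indicator_def)
    then show ?thesis
      using True by simp
  next
    case False
    then have "(\<lambda>x. indicator {0..\<beta>} x * indicator {x<..\<beta>} y :: ennreal) = (\<lambda>x. 0)"
      by (auto simp: fun_eq_iff indicator_def)
    then show ?thesis
      using False by (simp add: indicator_def)
  qed
  interpret pair_sigma_finite lborel M ..
  have [measurable]: "Measurable.pred (borel \<Otimes>\<^sub>M borel) (\<lambda>p :: real \<times> real. snd p \<in> {fst p<..\<beta>})"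
    unfolding greaterThanAtMost_iff by measurable
  have "(\<integral>\<^sup>+y. ennreal (indicator {0..\<beta>} y * y) \<partial>M)
      = (\<integral>\<^sup>+y. (\<integral>\<^sup>+x. indicator {0..\<beta>} x * indicator {x<..\<beta>} y \<partial>lborel) \<partial>M)"
    by (simp add: length)
  also have "\<dots> = (\<integral>\<^sup>+x. (\<integral>\<^sup>+y. indicator {0..\<beta>} x * indicator {x<..\<beta>} y \<partial>M) \<partial>lborel)"
    by (rule Fubini') measurable
  also have "\<dots> = (\<integral>\<^sup>+x. ennreal (indicator {0..\<beta>} x * (cdf M \<beta> - cdf M x)) \<partial>lborel)"
  proof (intro nn_integral_cong)
    fix x :: real
    show "(\<integral>\<^sup>+y. indicator {0..\<beta>} x * indicator {x<..\<beta>} y \<partial>M)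
        = ennreal (indicator {0..\<beta>} x * (cdf M \<beta> - cdf M x))"
      by (cases "x \<in> {0..\<beta>}") (simp_all add: emeasure_Ioc)
  qed
  also have "\<dots> = integral {0..\<beta>} (\<lambda>x. cdf M \<beta> - cdf M x)"
    using cdf_integrable_on cdf_nondecreasing
    by (intro nn_integral_has_integral_lebesgue integrable_integral integrable_diff) auto
  finally show ?thesis .
qed

lemma integral_indicator_times_id:
  assumes "0 \<le> \<beta>"
  shows "(\<integral>y. indicator {0..\<beta>} y * y \<partial>M) = \<beta> * cdf M \<beta> - integral {0..\<beta>} (cdf M)"
proof -
  have "integral {0..\<beta>} (\<lambda>x. cdf M \<beta> - cdf M x) = \<beta> * cdf M \<beta> - integral {0..\<beta>} (cdf M)"
    using assms cdf_integrable_on by (subst integral_diff) auto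
  moreover have "0 \<le> integral {0..\<beta>} (\<lambda>x. cdf M \<beta> - cdf M x)"
    using cdf_integrable_on cdf_nondecreasing by (intro integral_nonneg integrable_diff) auto
  ultimately show ?thesis
    using nn_integral_indicator_times_id[OF assms]
    by (subst integral_eq_nn_integral) (auto simp: indicator_def)
qed

lemma borel_measurable_reward_noise [measurable]: "reward_noise \<alpha>0 (cdf M) v \<beta> \<in> borel_measurable M"
  unfolding reward_noise_def[abs_def] reward_def cost_def win_def by measurable

lemma expectation_reward_noise:
  assumes nonneg: "AE y in M. 0 \<le> y" and "0 \<le> \<beta>"
  shows "expectation (reward_noise \<alpha>0 (cdf M) v \<beta>) = 0"
proof -
  have "expectation (reward_noise \<alpha>0 (cdf M) v \<beta>)
      = expectation (\<lambda>y. indicator {..\<beta>} y * (v - (1 - \<alpha>0) * \<beta>) - \<alpha>0 * (indicator {0..\<beta>} y * y)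
                          - rfun (cdf M) v \<beta> \<alpha>0)"
    using nonneg \<open>0 \<le> \<beta>\<close>
    by (intro integral_cong_AE)
       (auto simp: reward_noise_def reward_def cost_def win_def indicator_def algebra_simps)
  also have "\<dots> = measure M {..\<beta>} * (v - (1 - \<alpha>0) * \<beta>) - \<alpha>0 * (\<beta> * cdf M \<beta> - integral {0..\<beta>} (cdf M))
                   - rfun (cdf M) v \<beta> \<alpha>0"
  proof -
    have "integrable M (\<lambda>y. indicator {0..\<beta>} y * y :: real)"
      using \<open>0 \<le> \<beta>\<close> by (intro integrable_const_bound[where B = \<beta>]) (auto simp: indicator_def)
    moreover have "integrable M (\<lambda>y. indicator {..\<beta>} y * (v - (1 - \<alpha>0) * \<beta>) :: real)"
      by (intro integrable_const_bound[where B = "\<bar>v - (1 - \<alpha>0) * \<beta>\<bar>"]) (auto simp: indicator_def)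
    ultimately show ?thesis
      using \<open>0 \<le> \<beta>\<close>
      by (simp add: integral_indicator_times_id prob_space[simplified] emeasure_eq_measure)
  qed
  also have "\<dots> = 0"
    by (simp add: rfun_def cdf_def algebra_simps)
  finally show ?thesis .
qed

lemma nn_integral_exp_reward_noise_le:
  assumes nonneg: "AE y in M. 0 \<le> y" and "v \<in> {0..1}" "\<beta> \<in> {0..1}" "\<alpha>0 \<in> {0..1}"
  shows "(\<integral>\<^sup>+y. exp (l * reward_noise \<alpha>0 (cdf M) v \<beta> y) \<partial>M) \<le> exp (l\<^sup>2 / 8)"
proof -
  define C where "C = rfun (cdf M) v \<beta> \<alpha>0"
  interpret noise: interval_bounded_random_variable M "reward_noise \<alpha>0 (cdf M) v \<beta>"
      "min 0 (v - \<beta>) - C" "v - C"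
  proof
    show "random_variable borel (reward_noise \<alpha>0 (cdf M) v \<beta>)"
      by measurable
    show "AE y in M. reward_noise \<alpha>0 (cdf M) v \<beta> y \<in> {min 0 (v - \<beta>) - C..v - C}"
      using nonneg
      by eventually_elim (use reward_mem_interval assms in \<open>auto simp: reward_noise_def C_def\<close>)
  qed
  have "(\<integral>\<^sup>+y. exp (l * reward_noise \<alpha>0 (cdf M) v \<beta> y) \<partial>M)
      \<le> exp (l\<^sup>2 * (v - C - (min 0 (v - \<beta>) - C))\<^sup>2 / 8)"
    using assms by (intro noise.nn_integral_exp_le_of_expectation_0 expectation_reward_noise) auto
  also have "\<dots> \<le> exp (l\<^sup>2 / 8)"
    using assms by (auto simp: min_def power_le_one intro!: mult_left_le)
  finally show ?thesis .
qed

end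

section \<open>Estimating the shading factor\<close>

lemma abs_sub_le_of_affine:
  fixes A :: "real \<Rightarrow> real"
  assumes lin: "\<And>\<alpha>. A \<alpha> = A \<alpha>0 + (\<alpha>0 - \<alpha>) * K" and min: "\<bar>A a\<bar> \<le> \<bar>A \<alpha>0\<bar>" and K: "0 < K"
  shows "\<bar>a - \<alpha>0\<bar> \<le> 2 * \<bar>A \<alpha>0\<bar> / K"
proof -
  have "\<bar>a - \<alpha>0\<bar> * K = \<bar>A a - A \<alpha>0\<bar>"
    using lin[of a] K by (simp add: abs_mult abs_minus_commute)
  also have "\<dots> \<le> 2 * \<bar>A \<alpha>0\<bar>"
    using min by linarith
  finally show ?thesis
    using K by (simp add: pos_le_divide_eq)
qed

lemma sum_sub_rfun_eq:
  "(\<Sum>s\<in>I. r s - rfun G (v s) (\<beta> s) \<alpha>)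
    = (\<Sum>s\<in>I. r s - rfun G (v s) (\<beta> s) \<alpha>') + (\<alpha>' - \<alpha>) * (\<Sum>s\<in>I. integral {0..\<beta> s} G)"
  unfolding rfun_def sum_distrib_left sum.distrib[symmetric]
  by (intro sum.cong) (auto simp: algebra_simps)

lemma abs_argmin_rfun_sub_le:
  assumes argmin: "\<forall>\<alpha>\<in>{0..1}.
      \<bar>\<Sum>s\<in>I. r s - rfun G (v s) (\<beta> s) a\<bar> \<le> \<bar>\<Sum>s\<in>I. r s - rfun G (v s) (\<beta> s) \<alpha>\<bar>"
    and "\<alpha>0 \<in> {0..1}" and K: "0 < (\<Sum>s\<in>I. integral {0..\<beta> s} G)"
  shows "\<bar>a - \<alpha>0\<bar> \<le> 2 * \<bar>\<Sum>s\<in>I. r s - rfun G (v s) (\<beta> s) \<alpha>0\<bar> / (\<Sum>s\<in>I. integral {0..\<beta> s} G)"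
proof (rule abs_sub_le_of_affine[where A = "\<lambda>\<alpha>. \<Sum>s\<in>I. r s - rfun G (v s) (\<beta> s) \<alpha>"])
  show "(\<Sum>s\<in>I. r s - rfun G (v s) (\<beta> s) \<alpha>)
      = (\<Sum>s\<in>I. r s - rfun G (v s) (\<beta> s) \<alpha>0) + (\<alpha>0 - \<alpha>) * (\<Sum>s\<in>I. integral {0..\<beta> s} G)" for \<alpha>
    by (rule sum_sub_rfun_eq)
qed (use assms in auto)

section \<open>The repeated auction\<close>

(* What is known just before d_t is drawn: b_t is measurable for it and d_t is independent of it. *)
definition history :: "'a measure \<Rightarrow> (nat \<Rightarrow> 'a \<Rightarrow> real) \<Rightarrow> (nat \<Rightarrow> 'a \<Rightarrow> real) \<Rightarrow> nat \<Rightarrow> 'a measure" where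
  "history M v d t = gen_sigma (space M) (v ` {1..t} \<union> d ` {1..<t})"

definition feedback :: "real \<Rightarrow> (nat \<Rightarrow> 'a \<Rightarrow> real) \<Rightarrow> (nat \<Rightarrow> 'a \<Rightarrow> real) \<Rightarrow> (nat \<Rightarrow> 'a \<Rightarrow> real)
    \<Rightarrow> nat \<Rightarrow> ('a \<Rightarrow> real) set" where
  "feedback \<alpha>0 v b d t =
    (\<Union>s\<in>{1..<t}. {v s, \<lambda>\<omega>. win (b s \<omega>) (d s \<omega>), \<lambda>\<omega>. cost \<alpha>0 (b s \<omega>) (d s \<omega>)})"

lemma space_history [simp]: "space (history M v d t) = space M"
  by (simp add: history_def)

lemma borel_measurable_history_value: "s \<in> {1..t} \<Longrightarrow> v s \<in> borel_measurable (history M v d t)"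
  unfolding history_def by (intro borel_measurable_gen_sigma) auto

lemma borel_measurable_history_competing_bid:
  "s \<in> {1..<t} \<Longrightarrow> d s \<in> borel_measurable (history M v d t)"
  unfolding history_def by (intro borel_measurable_gen_sigma) auto

lemma measurable_history_mono:
  "f \<in> measurable (history M v d s) N \<Longrightarrow> s \<le> t \<Longrightarrow> f \<in> measurable (history M v d t) N"
  unfolding history_def by (erule measurable_gen_sigma_mono) auto

lemma borel_measurable_history_feedback:
  assumes b: "\<And>s. s \<in> {1..<t} \<Longrightarrow> b s \<in> borel_measurable (history M v d s)" and t: "1 \<le> t"
    and f: "f \<in> borel_measurable (gen_sigma (space M) (insert (v t) (feedback \<alpha>0 v b d t)))"
  shows "f \<in> borel_measurable (history M v d t)"
proof (rule measurable_gen_sigma_subset[OF space_history _ f])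
  fix X
  assume "X \<in> insert (v t) (feedback \<alpha>0 v b d t)"
  then consider "X = v t" | s where "s \<in> {1..<t}"
      "X = v s \<or> X = (\<lambda>\<omega>. win (b s \<omega>) (d s \<omega>)) \<or> X = (\<lambda>\<omega>. cost \<alpha>0 (b s \<omega>) (d s \<omega>))"
    unfolding feedback_def by blast
  then show "X \<in> borel_measurable (history M v d t)"
  proof cases
    case 1
    then show ?thesis
      using t by (simp add: borel_measurable_history_value)
  next
    case (2 s)
    have [measurable]: "b s \<in> borel_measurable (history M v d t)"
      using 2 by (intro measurable_history_mono[OF b]) auto
    have [measurable]: "v s \<in> borel_measurable (history M v d t)"
      "d s \<in> borel_measurable (history M v d t)"
      using 2 by (auto intro: borel_measurable_history_value borel_measurable_history_competing_bid)
    show ?thesis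
      using 2(2) unfolding win_def cost_def by auto
  qed
qed

lemma borel_measurable_history_bid:
  assumes b1: "\<And>\<omega>. \<omega> \<in> space M \<Longrightarrow> b 1 \<omega> = 1"
    and adapted: "\<And>t. t \<in> {2..T} \<Longrightarrow>
      b t \<in> borel_measurable (gen_sigma (space M) (insert (v t) (feedback \<alpha>0 v b d t)))"
  shows "t \<in> {1..T} \<Longrightarrow> b t \<in> borel_measurable (history M v d t)"
proof (induction t rule: less_induct)
  case (less t)
  show ?case
  proof (cases "t = 1")
    case True
    then show ?thesis
      using b1 by (subst measurable_cong[where g = "\<lambda>_. 1"]) auto
  next
    case False
    with less.prems have t: "t \<in> {2..T}"
      by auto
    show ?thesis
    proof (rule borel_measurable_history_feedback[OF _ _ adapted[OF t]])
      show "b s \<in> borel_measurable (history M v d s)" if "s \<in> {1..<t}" for s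
        using less.IH that t by auto
    qed (use t in auto)
  qed
qed

locale bidding_process = prob_space M for M :: "'a measure" +
  fixes v d b :: "nat \<Rightarrow> 'a \<Rightarrow> real" and G :: "real \<Rightarrow> real" and \<alpha>0 :: real and T :: nat
  assumes alpha0: "\<alpha>0 \<in> {0..1}"
    and indep: "indep_vars (\<lambda>_. borel) (\<lambda>i. case i of Inl t \<Rightarrow> v t | Inr t \<Rightarrow> d t)
                  (Inl ` {1..T} \<union> Inr ` {1..T})"
    and v_range: "\<And>t \<omega>. t \<in> {1..T} \<Longrightarrow> \<omega> \<in> space M \<Longrightarrow> v t \<omega> \<in> {0..1}"
    and b_range: "\<And>t \<omega>. t \<in> {1..T} \<Longrightarrow> \<omega> \<in> space M \<Longrightarrow> b t \<omega> \<in> {0..1}"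
    and d_nonneg: "\<And>t \<omega>. t \<in> {1..T} \<Longrightarrow> \<omega> \<in> space M \<Longrightarrow> 0 \<le> d t \<omega>"
    and G_cdf: "\<And>t y. t \<in> {1..T} \<Longrightarrow> measure M {\<omega> \<in> space M. d t \<omega> \<le> y} = G y"
    and b_history: "\<And>t. t \<in> {1..T} \<Longrightarrow> b t \<in> borel_measurable (history M v d t)"
begin

lemma random_variable_value: "t \<in> {1..T} \<Longrightarrow> random_variable borel (v t)"
  using indep unfolding indep_vars_def2 by (metis (no_types, lifting) UnCI imageI sum.case(1))

lemma random_variable_competing_bid: "t \<in> {1..T} \<Longrightarrow> random_variable borel (d t)"
  using indep unfolding indep_vars_def2 by (metis (no_types, lifting) UnCI imageI sum.case(2))

lemma sets_history_subset: "t \<le> T \<Longrightarrow> sets (history M v d t) \<subseteq> events"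
  unfolding history_def
  by (intro sets_gen_sigma_subset) (auto intro: random_variable_value random_variable_competing_bid)

lemma measurable_history_subset:
  "t \<le> T \<Longrightarrow> f \<in> measurable (history M v d t) N \<Longrightarrow> f \<in> measurable M N"
  using measurable_mono[OF order_refl _ sets_history_subset] by auto

lemma random_variable_bid: "t \<in> {1..T} \<Longrightarrow> random_variable borel (b t)"
  by (rule measurable_history_subset[OF _ b_history]) auto

lemma indep_set_history:
  assumes "t \<in> {1..T}"
  shows "indep_set (sets (history M v d t)) {d t -` A \<inter> space M | A. A \<in> sets borel}"
proof -
  let ?X = "\<lambda>i. case i of Inl t \<Rightarrow> v t | Inr t \<Rightarrow> d t"
  have "history M v d t = gen_sigma (space M) (?X ` (Inl ` {1..t} \<union> Inr ` {1..<t}))"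
    by (simp add: history_def image_Un image_image)
  moreover have "indep_set (sets (gen_sigma (space M) (?X ` (Inl ` {1..t} \<union> Inr ` {1..<t}))))
      {?X (Inr t) -` A \<inter> space M | A. A \<in> sets borel}"
    using assms by (intro indep_set_gen_sigma[OF indep]) auto
  ultimately show ?thesis
    by simp
qed

lemma real_distribution_competing_bid: "t \<in> {1..T} \<Longrightarrow> real_distribution (distr M borel (d t))"
  by (intro real_distribution_distr random_variable_competing_bid)

lemma cdf_competing_bid:
  assumes "t \<in> {1..T}"
  shows "cdf (distr M borel (d t)) = G"
proof
  fix y
  have "d t -` {..y} \<inter> space M = {\<omega> \<in> space M. d t \<omega> \<le> y}"
    by auto
  then show "cdf (distr M borel (d t)) y = G y"
    using assms G_cdf random_variable_competing_bid by (simp add: cdf_def measure_distr)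
qed

lemma AE_competing_bid_nonneg: "t \<in> {1..T} \<Longrightarrow> AE y in distr M borel (d t). 0 \<le> y"
  by (subst AE_distr_iff) (auto simp: d_nonneg random_variable_competing_bid)

lemma borel_measurable_G:
  assumes "1 \<le> T"
  shows "G \<in> borel_measurable borel" and "(\<lambda>x. integral {0..x} G) \<in> borel_measurable borel"
proof -
  interpret D: real_distribution "distr M borel (d 1)"
    using assms by (intro real_distribution_competing_bid) auto
  have "G = cdf (distr M borel (d 1))"
    using assms by (simp add: cdf_competing_bid)
  then show "G \<in> borel_measurable borel" "(\<lambda>x. integral {0..x} G) \<in> borel_measurable borel"
    using D.borel_measurable_integral_cdf borel_measurable_mono[OF D.mono_cdf] by simp_all
qed

definition noise_sum :: "nat \<Rightarrow> 'a \<Rightarrow> real" where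
  "noise_sum t \<omega> = (\<Sum>s = 1..<t. reward_noise \<alpha>0 G (v s \<omega>) (b s \<omega>) (d s \<omega>))"

lemma borel_measurable_history_noise_sum:
  assumes t: "t \<in> {1..T}"
  shows "noise_sum t \<in> borel_measurable (history M v d t)"
proof -
  have [measurable]: "G \<in> borel_measurable borel" "(\<lambda>x. integral {0..x} G) \<in> borel_measurable borel"
    using t borel_measurable_G by auto
  have "(\<lambda>\<omega>. reward_noise \<alpha>0 G (v s \<omega>) (b s \<omega>) (d s \<omega>)) \<in> borel_measurable (history M v d t)"
    if s: "s \<in> {1..<t}" for s
  proof -
    have [measurable]: "v s \<in> borel_measurable (history M v d t)"
      "d s \<in> borel_measurable (history M v d t)"
      using s by (auto intro: borel_measurable_history_value borel_measurable_history_competing_bid)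
    have [measurable]: "b s \<in> borel_measurable (history M v d t)"
      using s t by (intro measurable_history_mono[OF b_history]) auto
    show ?thesis
      unfolding reward_noise_def reward_def cost_def win_def rfun_def by measurable
  qed
  then show ?thesis
    unfolding noise_sum_def[abs_def] by (rule borel_measurable_sum)
qed

lemma nn_integral_exp_noise_sum_Suc:
  assumes t: "t \<in> {1..T}"
  shows "(\<integral>\<^sup>+\<omega>. exp (l * noise_sum (Suc t) \<omega>) \<partial>M)
    \<le> exp (l\<^sup>2 / 8) * (\<integral>\<^sup>+\<omega>. exp (l * noise_sum t \<omega>) \<partial>M)"
proof -
  interpret D: real_distribution "distr M borel (d t)"
    using t by (rule real_distribution_competing_bid)
  have G: "G = cdf (distr M borel (d t))"
    using t by (simp add: cdf_competing_bid)
  have [measurable]: "G \<in> borel_measurable borel" "(\<lambda>x. integral {0..x} G) \<in> borel_measurable borel"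
    using t borel_measurable_G by auto
  define Y where "Y \<omega> = (noise_sum t \<omega>, v t \<omega>, b t \<omega>)" for \<omega>
  define g where "g p = ennreal (exp (l * fst (fst p)) *
      exp (l * reward_noise \<alpha>0 G (fst (snd (fst p))) (snd (snd (fst p))) (snd p)))"
    for p :: "(real \<times> real \<times> real) \<times> real"
  have Y: "Y \<in> measurable (history M v d t) (borel \<Otimes>\<^sub>M (borel \<Otimes>\<^sub>M borel))"
    unfolding Y_def using t
    by (intro measurable_Pair borel_measurable_history_noise_sum borel_measurable_history_value
        b_history) auto
  have g: "g \<in> borel_measurable ((borel \<Otimes>\<^sub>M (borel \<Otimes>\<^sub>M borel)) \<Otimes>\<^sub>M borel)"
    unfolding g_def reward_noise_def reward_def cost_def win_def rfun_def by measurable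
  have "(\<integral>\<^sup>+\<omega>. exp (l * noise_sum (Suc t) \<omega>) \<partial>M) = (\<integral>\<^sup>+\<omega>. g (Y \<omega>, d t \<omega>) \<partial>M)"
    using t by (intro nn_integral_cong) (simp add: g_def Y_def noise_sum_def distrib_left exp_add)
  also have "\<dots> = (\<integral>\<^sup>+\<omega>. (\<integral>\<^sup>+y. g (Y \<omega>, y) \<partial>distr M borel (d t)) \<partial>M)"
    using t by (intro nn_integral_indep_set[OF sets_history_subset space_history Y
        random_variable_competing_bid indep_set_history g]) auto
  also have "\<dots> \<le> (\<integral>\<^sup>+\<omega>. ennreal (exp (l * noise_sum t \<omega>)) * ennreal (exp (l\<^sup>2 / 8)) \<partial>M)"
  proof (rule nn_integral_mono)
    fix \<omega>
    assume \<omega>: "\<omega> \<in> space M"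
    have "(\<integral>\<^sup>+y. exp (l * reward_noise \<alpha>0 G (v t \<omega>) (b t \<omega>) y) \<partial>distr M borel (d t))
        \<le> exp (l\<^sup>2 / 8)"
      unfolding G using \<omega> t v_range b_range alpha0 AE_competing_bid_nonneg
      by (intro D.nn_integral_exp_reward_noise_le) auto
    moreover have "(\<integral>\<^sup>+y. g (Y \<omega>, y) \<partial>distr M borel (d t))
        = exp (l * noise_sum t \<omega>)
          * (\<integral>\<^sup>+y. exp (l * reward_noise \<alpha>0 G (v t \<omega>) (b t \<omega>) y) \<partial>distr M borel (d t))"
      unfolding g_def Y_def G by (subst nn_integral_cmult[symmetric]) (auto simp: ennreal_mult)
    ultimately show "(\<integral>\<^sup>+y. g (Y \<omega>, y) \<partial>distr M borel (d t))
        \<le> ennreal (exp (l * noise_sum t \<omega>)) * ennreal (exp (l\<^sup>2 / 8))"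
      by (simp add: mult_left_mono)
  qed
  also have "\<dots> = exp (l\<^sup>2 / 8) * (\<integral>\<^sup>+\<omega>. exp (l * noise_sum t \<omega>) \<partial>M)"
    using t measurable_history_subset[OF _ borel_measurable_history_noise_sum]
    by (subst nn_integral_multc) (auto simp: ac_simps)
  finally show ?thesis .
qed

lemma nn_integral_exp_noise_sum_le:
  "t \<in> {1..T} \<Longrightarrow> (\<integral>\<^sup>+\<omega>. exp (l * noise_sum t \<omega>) \<partial>M) \<le> exp (real (t - 1) * l\<^sup>2 / 8)"
proof (induction t)
  case 0
  then show ?case
    by simp
next
  case (Suc t)
  show ?case
  proof (cases "t = 0")
    case True
    then show ?thesis
      by (simp add: noise_sum_def emeasure_space_1)
  next
    case False
    with Suc.prems have t: "t \<in> {1..T}"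
      by auto
    have "(\<integral>\<^sup>+\<omega>. exp (l * noise_sum (Suc t) \<omega>) \<partial>M)
        \<le> exp (l\<^sup>2 / 8) * (\<integral>\<^sup>+\<omega>. exp (l * noise_sum t \<omega>) \<partial>M)"
      using t by (rule nn_integral_exp_noise_sum_Suc)
    also have "\<dots> \<le> ennreal (exp (l\<^sup>2 / 8)) * ennreal (exp (real (t - 1) * l\<^sup>2 / 8))"
      using Suc.IH[OF t] by (rule mult_left_mono) simp
    also have "\<dots> = exp (real (Suc t - 1) * l\<^sup>2 / 8)"
    proof -
      have "l\<^sup>2 / 8 + real (t - 1) * l\<^sup>2 / 8 = real (Suc t - 1) * l\<^sup>2 / 8"
        using t by (simp add: of_nat_diff field_simps)
      then show ?thesis
        by (simp add: mult_exp_exp flip: ennreal_mult)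
    qed
    finally show ?thesis .
  qed
qed

lemma prob_noise_sum_gt:
  assumes "t \<in> {2..T}" and "0 < \<epsilon>"
  shows "prob {\<omega> \<in> space M. \<epsilon> < \<bar>noise_sum t \<omega>\<bar>} \<le> 2 * exp (- 2 * \<epsilon>\<^sup>2 / real (t - 1))"
  using assms
  by (intro prob_abs_gt_le_of_mgf_bound nn_integral_exp_noise_sum_le
      measurable_history_subset[OF _ borel_measurable_history_noise_sum]) auto

lemma prob_noise_sum_gt_confidence_radius:
  assumes t: "t \<in> {2..T}" and \<delta>: "0 < \<delta>" "\<delta> < 1"
  shows "prob {\<omega> \<in> space M. sqrt (2 * real (t - 1) * ln (2 * real T / \<delta>)) < \<bar>noise_sum t \<omega>\<bar>}
    \<le> \<delta> / T"
proof -
  define L where "L = ln (2 * real T / \<delta>)"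
  have "1 < 2 * real T / \<delta>"
    using t \<delta> by (simp add: field_simps)
  then have L: "0 < L"
    by (simp add: L_def)
  have "prob {\<omega> \<in> space M. sqrt (2 * real (t - 1) * L) < \<bar>noise_sum t \<omega>\<bar>}
      \<le> 2 * exp (- 2 * (sqrt (2 * real (t - 1) * L))\<^sup>2 / real (t - 1))"
    using t L by (intro prob_noise_sum_gt) auto
  also have "- 2 * (sqrt (2 * real (t - 1) * L))\<^sup>2 / real (t - 1) = - 4 * L"
  proof -
    have "0 < real t - 1"
      using t by simp
    then show ?thesis
      using L by (simp add: of_nat_diff field_simps)
  qed
  also have "2 * exp (- 4 * L) \<le> 2 * exp (- L)"
    using L by simp
  also have "2 * exp (- L) = \<delta> / T"
    using t \<delta> \<open>1 < 2 * real T / \<delta>\<close> by (simp add: L_def exp_minus)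
  finally show ?thesis
    by (simp add: L_def)
qed

lemma prob_all_noise_sum_le:
  assumes \<delta>: "0 < \<delta>" "\<delta> < 1"
  shows "1 - \<delta> \<le> prob {\<omega> \<in> space M. \<forall>t\<in>{2..T}.
            \<bar>noise_sum t \<omega>\<bar> \<le> sqrt (2 * real (t - 1) * ln (2 * real T / \<delta>))}"
proof -
  have "real (card {2..T}) * (\<delta> / T) \<le> real T * (\<delta> / T)"
    using \<delta> by (intro mult_right_mono) auto
  also have "\<dots> \<le> \<delta>"
    using \<delta> by (cases "T = 0") auto
  finally have "1 - \<delta> \<le> 1 - real (card {2..T}) * (\<delta> / T)"
    by simp
  also have "\<dots> \<le> prob {\<omega> \<in> space M. \<forall>t\<in>{2..T}.
            \<bar>noise_sum t \<omega>\<bar> \<le> sqrt (2 * real (t - 1) * ln (2 * real T / \<delta>))}"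
  proof (rule prob_all_ge_of_prob_not_le)
    fix t
    assume t: "t \<in> {2..T}"
    then have [measurable]: "noise_sum t \<in> borel_measurable M"
      by (intro measurable_history_subset[OF _ borel_measurable_history_noise_sum]) auto
    show "{\<omega> \<in> space M. \<not> \<bar>noise_sum t \<omega>\<bar> \<le> sqrt (2 * real (t - 1) * ln (2 * real T / \<delta>))} \<in> events"
      by measurable
    show "prob {\<omega> \<in> space M. \<not> \<bar>noise_sum t \<omega>\<bar> \<le> sqrt (2 * real (t - 1) * ln (2 * real T / \<delta>))}
        \<le> \<delta> / T"
      using prob_noise_sum_gt_confidence_radius[OF t \<delta>] by (simp add: not_le)
  qed simp
  finally show ?thesis .
qed

lemma borel_measurable_feedback:
  assumes "t \<in> {1..T}" and f: "f \<in> borel_measurable (gen_sigma (space M) (feedback \<alpha>0 v b d t))"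
  shows "f \<in> borel_measurable M"
proof -
  have "f \<in> borel_measurable (history M v d t)"
  proof (rule borel_measurable_history_feedback)
    show "b s \<in> borel_measurable (history M v d s)" if "s \<in> {1..<t}" for s
      using that assms by (intro b_history) auto
    show "f \<in> borel_measurable (gen_sigma (space M) (insert (v t) (feedback \<alpha>0 v b d t)))"
      by (rule measurable_gen_sigma_mono[OF f]) auto
  qed (use assms in auto)
  then show ?thesis
    using assms by (intro measurable_history_subset) auto
qed

lemma borel_measurable_integral_G_bid:
  assumes "s \<in> {1..T}"
  shows "(\<lambda>\<omega>. integral {0..b s \<omega>} G) \<in> borel_measurable M"
proof -
  have [measurable]: "(\<lambda>x. integral {0..x} G) \<in> borel_measurable borel" "b s \<in> borel_measurable M"
    using assms borel_measurable_G random_variable_bid by auto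
  show ?thesis
    by measurable
qed

end

locale shading_estimator = bidding_process +
  fixes atil :: "nat \<Rightarrow> 'a \<Rightarrow> real"
  assumes atil_argmin: "\<And>t \<omega>. t \<in> {2..T} \<Longrightarrow> \<omega> \<in> space M \<Longrightarrow>
      \<forall>\<alpha>\<in>{0..1}.
        \<bar>\<Sum>s = 1..<t. reward \<alpha>0 (v s \<omega>) (b s \<omega>) (d s \<omega>) - rfun G (v s \<omega>) (b s \<omega>) (atil t \<omega>)\<bar>
        \<le> \<bar>\<Sum>s = 1..<t. reward \<alpha>0 (v s \<omega>) (b s \<omega>) (d s \<omega>) - rfun G (v s \<omega>) (b s \<omega>) \<alpha>\<bar>"
    and atil_adapted: "\<And>t. t \<in> {2..T} \<Longrightarrow>
      atil t \<in> borel_measurable (gen_sigma (space M) (feedback \<alpha>0 v b d t))"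
begin

lemma abs_atil_sub_le:
  assumes "t \<in> {2..T}" "\<omega> \<in> space M" and K: "0 < (\<Sum>s = 1..<t. integral {0..b s \<omega>} G)"
  shows "\<bar>atil t \<omega> - \<alpha>0\<bar> \<le> 2 * \<bar>noise_sum t \<omega>\<bar> / (\<Sum>s = 1..<t. integral {0..b s \<omega>} G)"
  using abs_argmin_rfun_sub_le[OF atil_argmin[OF assms(1,2)] alpha0 K]
  by (simp add: noise_sum_def reward_noise_def)

lemma sets_Collect_atil_close:
  "{\<omega> \<in> space M. \<forall>t\<in>{2..T}. (\<Sum>s = 1..<t. integral {0..b s \<omega>} G) > 0 \<longrightarrow>
      \<bar>atil t \<omega> - \<alpha>0\<bar> \<le> 2 * r t / (\<Sum>s = 1..<t. integral {0..b s \<omega>} G)} \<in> events"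
proof (rule sets.sets_Collect_finite_All)
  fix t
  assume t: "t \<in> {2..T}"
  have [measurable]: "atil t \<in> borel_measurable M"
    using t by (intro borel_measurable_feedback[of t] atil_adapted) auto
  have [measurable]: "(\<lambda>\<omega>. \<Sum>s = 1..<t. integral {0..b s \<omega>} G) \<in> borel_measurable M"
    using t by (intro borel_measurable_sum borel_measurable_integral_G_bid) auto
  show "{\<omega> \<in> space M. (\<Sum>s = 1..<t. integral {0..b s \<omega>} G) > 0 \<longrightarrow>
      \<bar>atil t \<omega> - \<alpha>0\<bar> \<le> 2 * r t / (\<Sum>s = 1..<t. integral {0..b s \<omega>} G)} \<in> events"
    by measurable
qed simp

lemma prob_atil_close:
  assumes "0 < \<delta>" "\<delta> < 1"
  shows "1 - \<delta> \<le> prob {\<omega> \<in> space M. \<forall>t\<in>{2..T}. (\<Sum>s = 1..<t. integral {0..b s \<omega>} G) > 0 \<longrightarrow>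
            \<bar>atil t \<omega> - \<alpha>0\<bar> \<le> 2 * sqrt (2 * real (t - 1) * ln (2 * real T / \<delta>))
                                     / (\<Sum>s = 1..<t. integral {0..b s \<omega>} G)}"
    (is "_ \<le> prob ?close")
proof -
  let ?r = "\<lambda>t. sqrt (2 * real (t - 1) * ln (2 * real T / \<delta>))"
  have "{\<omega> \<in> space M. \<forall>t\<in>{2..T}. \<bar>noise_sum t \<omega>\<bar> \<le> ?r t} \<subseteq> ?close"
  proof safe
    fix \<omega> t
    assume \<omega>: "\<omega> \<in> space M" and noise: "\<forall>t\<in>{2..T}. \<bar>noise_sum t \<omega>\<bar> \<le> ?r t"
      and t: "t \<in> {2..T}" and K: "0 < (\<Sum>s = 1..<t. integral {0..b s \<omega>} G)"
    have "\<bar>atil t \<omega> - \<alpha>0\<bar> \<le> 2 * \<bar>noise_sum t \<omega>\<bar> / (\<Sum>s = 1..<t. integral {0..b s \<omega>} G)"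
      using t \<omega> K by (rule abs_atil_sub_le)
    also have "\<dots> \<le> 2 * ?r t / (\<Sum>s = 1..<t. integral {0..b s \<omega>} G)"
      using noise t K by (intro divide_right_mono) auto
    finally show "\<bar>atil t \<omega> - \<alpha>0\<bar> \<le> 2 * ?r t / (\<Sum>s = 1..<t. integral {0..b s \<omega>} G)" .
  qed
  then have "prob {\<omega> \<in> space M. \<forall>t\<in>{2..T}. \<bar>noise_sum t \<omega>\<bar> \<le> ?r t} \<le> prob ?close"
    by (intro finite_measure_mono sets_Collect_atil_close)
  then show ?thesis
    using prob_all_noise_sum_le[OF assms] by linarith
qed

end

theorem lemma5:
  fixes M :: "'a measure"
    and v d b atil :: "nat \<Rightarrow> 'a \<Rightarrow> real"
    and G :: "real \<Rightarrow> real"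
    and \<alpha>0 \<delta> :: real and T :: nat
  assumes "prob_space M"
    and alpha0: "\<alpha>0 \<in> {0..1}"
    and delta: "0 < \<delta>" "\<delta> < 1"
    and v_meas: "\<And>t. t \<in> {1..T} \<Longrightarrow> v t \<in> borel_measurable M"
    and d_meas: "\<And>t. t \<in> {1..T} \<Longrightarrow> d t \<in> borel_measurable M"
    and indep: "prob_space.indep_vars M (\<lambda>_. borel)
                  (\<lambda>i. case i of Inl t \<Rightarrow> v t | Inr t \<Rightarrow> d t)
                  (Inl ` {1..T} \<union> Inr ` {1..T})"
    and v_ident: "\<And>t. t \<in> {1..T} \<Longrightarrow> distr M borel (v t) = distr M borel (v 1)"
    and v_range: "\<And>t \<omega>. t \<in> {1..T} \<Longrightarrow> \<omega> \<in> space M \<Longrightarrow> v t \<omega> \<in> {0..1}"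
    and d_range: "\<And>t \<omega>. t \<in> {1..T} \<Longrightarrow> \<omega> \<in> space M \<Longrightarrow> d t \<omega> \<ge> 0"
    and G_cdf: "\<And>t y. t \<in> {1..T} \<Longrightarrow> measure M {\<omega> \<in> space M. d t \<omega> \<le> y} = G y"
    \<comment> \<open>the algorithm: first bid\<close>
    and b1: "\<And>\<omega>. \<omega> \<in> space M \<Longrightarrow> b 1 \<omega> = 1"
    \<comment> \<open>alpha-tilde_t is an argmin over [0,1]\<close>
    and atil_argmin: "\<And>t \<omega>. t \<in> {2..T} \<Longrightarrow> \<omega> \<in> space M \<Longrightarrow>
        atil t \<omega> \<in> {0..1} \<and>
        (\<forall>\<alpha>\<in>{0..1}.
          \<bar>\<Sum>s = 1..<t. reward \<alpha>0 (v s \<omega>) (b s \<omega>) (d s \<omega>) - rfun G (v s \<omega>) (b s \<omega>) (atil t \<omega>)\<bar>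
          \<le> \<bar>\<Sum>s = 1..<t. reward \<alpha>0 (v s \<omega>) (b s \<omega>) (d s \<omega>) - rfun G (v s \<omega>) (b s \<omega>) \<alpha>\<bar>)"
    \<comment> \<open>b_t is an argmax of r(v_t, . , alpha-tilde_t) over all bids b >= 0 (ties broken inside [0,1])\<close>
    and b_argmax: "\<And>t \<omega>. t \<in> {2..T} \<Longrightarrow> \<omega> \<in> space M \<Longrightarrow>
        b t \<omega> \<in> {0..1} \<and>
        (\<forall>\<beta>\<ge>0. rfun G (v t \<omega>) \<beta> (atil t \<omega>) \<le> rfun G (v t \<omega>) (b t \<omega>) (atil t \<omega>))"
    \<comment> \<open>bandit feedback: alpha-tilde_t uses only (v_s, x_s, c_s)_{s<t}; b_t additionally v_t\<close>
    and atil_adapted: "\<And>t. t \<in> {2..T} \<Longrightarrow> atil t \<in> borel_measurable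
        (gen_sigma (space M) (\<Union>s\<in>{1..<t}. {v s, (\<lambda>\<omega>. win (b s \<omega>) (d s \<omega>)),
                                               (\<lambda>\<omega>. cost \<alpha>0 (b s \<omega>) (d s \<omega>))}))"
    and b_adapted: "\<And>t. t \<in> {2..T} \<Longrightarrow> b t \<in> borel_measurable
        (gen_sigma (space M) (insert (v t) (\<Union>s\<in>{1..<t}. {v s, (\<lambda>\<omega>. win (b s \<omega>) (d s \<omega>)),
                                               (\<lambda>\<omega>. cost \<alpha>0 (b s \<omega>) (d s \<omega>))})))"
  shows "measure M {\<omega> \<in> space M. \<forall>t\<in>{2..T}.
            (\<Sum>s = 1..<t. integral {0..b s \<omega>} G) > 0 \<longrightarrow>
            \<bar>atil t \<omega> - \<alpha>0\<bar> \<le> 2 * sqrt (2 * real (t - 1) * ln (2 * real T / \<delta>))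
                                     / (\<Sum>s = 1..<t. integral {0..b s \<omega>} G)} \<ge> 1 - \<delta>"
proof -
  interpret prob_space M by fact
  \<comment> \<open>v_meas and d_meas follow from indep.\<close>
  have "b t \<in> borel_measurable (history M v d t)" if "t \<in> {1..T}" for t
    using b1 b_adapted[folded feedback_def] that by (rule borel_measurable_history_bid)
  moreover have "b t \<omega> \<in> {0..1}" if "t \<in> {1..T}" "\<omega> \<in> space M" for t \<omega>
    using that b1 b_argmax[of t \<omega>] by (cases "t = 1") auto
  ultimately interpret shading_estimator M v d b G \<alpha>0 T atil
    using alpha0 indep v_range d_range G_cdf atil_argmin atil_adapted[folded feedback_def]
    by unfold_locales auto
  show ?thesis
    using prob_atil_close[OF delta] by simp
qed

end
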